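(* Let $k\ge1$ and let $X,Y$ be $k$-good random valuations with $\|X\|_1\le M$ and $\|Y\|_1\le M$ almost surely, for some $M\ge1$. Then \[ |\textsc{Rev}(X)-\textsc{Rev}(Y)|\le(2M+1)\sqrt{\mathrm{Dist}(X,Y)} . \]
   Context: $\|x\|_1=\sum_i|x_i|$. $\mathrm{Dist}(X,Y)$ is the Prohorov distance between the distributions of $X$ and $Y$ with respect to $\|\cdot\|_1$: the infimum of all $\rho>0$ such that $\mathbb{P}[X\in A]\le\mathbb{P}[Y\in B_\rho(A)]+\rho$ and $\mathbb{P}[Y\in A]\le\mathbb{P}[X\in B_\rho(A)]+\rho$ for all measurable $A$, where $B_\rho(A)=\{y:\|y-x\|_1<\rho\text{ for some }x\in A\}$. A $k$-good random valuation is a random vector in $\mathbb{R}_+^k$ (no independence assumed). A mechanism is a pair $\mu=(q,s)$ of Borel functions $q:\mathbb{R}_+^k\to[0,1]^k$, $s:\mathbb{R}_+^k\to\mathbb{R}$, with buyer payoff $b(x)=q(x)\cdot x-s(x)$; IR: $b(x)\ge0$ for all $x$; IC: $b(x)\ge q(\tilde x)\cdot x-s(\tilde x)$ for all $x,\tilde x$. $\textsc{Rev}(X)=\sup\mathbb{E}[s(X)]$ over all IC and IR mechanisms. *)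

theory Defs
  imports "HOL-Probability.Probability"
begin

text \<open>Valuations in R_+^k are modelled as vectors of type real^'k, 'k a finite
  (nonempty) index type, so k = CARD('k) \<ge> 1.\<close>

definition norm1 :: "real^'k \<Rightarrow> real" where
  "norm1 x = (\<Sum>i\<in>UNIV. \<bar>x $ i\<bar>)"

definition nonneg_orthant :: "(real^'k) set" where
  "nonneg_orthant = {x. \<forall>i. 0 \<le> x $ i}"

definition good_random_valuation :: "'w measure \<Rightarrow> ('w \<Rightarrow> real^'k) \<Rightarrow> bool" where
  "good_random_valuation Omega X \<longleftrightarrow>
     prob_space Omega \<and> X \<in> borel_measurable Omega \<and> (\<forall>w\<in>space Omega. X w \<in> nonneg_orthant)"

definition buyer_payoff :: "(real^'k \<Rightarrow> real^'k) \<Rightarrow> (real^'k \<Rightarrow> real) \<Rightarrow> real^'k \<Rightarrow> real" where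
  "buyer_payoff q s x = q x \<bullet> x - s x"

definition IC_IR_mechanism :: "(real^'k \<Rightarrow> real^'k) \<Rightarrow> (real^'k \<Rightarrow> real) \<Rightarrow> bool" where
  "IC_IR_mechanism q s \<longleftrightarrow>
     q \<in> borel_measurable borel \<and> s \<in> borel_measurable borel \<and>
     (\<forall>x\<in>nonneg_orthant. \<forall>i. 0 \<le> q x $ i \<and> q x $ i \<le> 1) \<and>
     (\<forall>x\<in>nonneg_orthant. buyer_payoff q s x \<ge> 0) \<and>
     (\<forall>x\<in>nonneg_orthant. \<forall>y\<in>nonneg_orthant. buyer_payoff q s x \<ge> q y \<bullet> x - s y)"

text \<open>Rev(X) = sup of the expected revenue E[s(X)] over IC and IR mechanisms
  (for which s(X) is integrable; under a.s. boundedness of X this is automatic).\<close>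
definition Rev :: "'w measure \<Rightarrow> ('w \<Rightarrow> real^'k) \<Rightarrow> real" where
  "Rev Omega X = Sup {(\<integral>w. s (X w) \<partial>Omega) | q s.
       IC_IR_mechanism q s \<and> integrable Omega (\<lambda>w. s (X w))}"

definition ball1 :: "real \<Rightarrow> (real^'k) set \<Rightarrow> (real^'k) set" where
  "ball1 \<rho> A = {y. \<exists>x\<in>A. norm1 (y - x) < \<rho>}"

definition prohorov :: "(real^'k) measure \<Rightarrow> (real^'k) measure \<Rightarrow> real" where
  "prohorov P Q = Inf {\<rho>. \<rho> > 0 \<and> (\<forall>A\<in>sets borel.
       measure P A \<le> measure Q (ball1 \<rho> A) + \<rho> \<and>
       measure Q A \<le> measure P (ball1 \<rho> A) + \<rho>)}"

definition Dist :: "'w measure \<Rightarrow> ('w \<Rightarrow> real^'k) \<Rightarrow> 'v measure \<Rightarrow> ('v \<Rightarrow> real^'k) \<Rightarrow> real" where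
  "Dist Omega1 X Omega2 Y = prohorov (distr Omega1 borel X) (distr Omega2 borel Y)"

end

theory Submission
  imports Defs
begin

text \<open>Fix a mechanism for Y and let e = sqrt \<rho>, where \<rho> is admissible in the Prohorov
  distance. Replacing its option set by a finite net and discounting all prices by the factor
  1 - e yields a mechanism whose price at any valuation x is at least the original price at any y
  with norm1 (x - y) < \<rho>, up to an error of about e M + \<rho> / e: deviating to a much cheaper
  option now costs the buyer e times the price difference. The Prohorov condition then compares
  the tail probabilities of the two price distributions up to \<rho>, and integrating the tails
  (layer cake) gives an expected revenue loss of at most e M + \<rho> / e + M \<rho> \<le> (2 M + 1) sqrt \<rho>.\<close>

section \<open>The l1 norm and the nonnegative orthant\<close>

lemma norm1_nonneg: "0 \<le> norm1 x"
  unfolding norm1_def by (simp add: sum_nonneg)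

lemma abs_inner_le_norm1:
  fixes a v :: "real^'k"
  assumes "\<And>i. \<bar>a $ i\<bar> \<le> c"
  shows "\<bar>a \<bullet> v\<bar> \<le> c * norm1 v"
proof -
  have "\<bar>a \<bullet> v\<bar> = \<bar>\<Sum>i\<in>UNIV. a $ i * v $ i\<bar>" by (simp add: inner_vec_def)
  also have "\<dots> \<le> (\<Sum>i\<in>UNIV. \<bar>a $ i * v $ i\<bar>)" by (rule sum_abs)
  also have "\<dots> \<le> (\<Sum>i\<in>UNIV. c * \<bar>v $ i\<bar>)"
    by (rule sum_mono) (simp add: abs_mult assms mult_right_mono)
  also have "\<dots> = c * norm1 v" by (simp add: norm1_def sum_distrib_left)
  finally show ?thesis .
qed

lemma inner_nonneg_orthant:
  assumes "\<And>i. 0 \<le> a $ i" and "x \<in> nonneg_orthant"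
  shows "0 \<le> a \<bullet> x"
  using assms unfolding inner_vec_def nonneg_orthant_def by (auto intro!: sum_nonneg)

lemma zero_in_nonneg_orthant [simp]: "0 \<in> nonneg_orthant"
  by (simp add: nonneg_orthant_def)

lemma closed_nonneg_orthant: "closed (nonneg_orthant :: (real^'k) set)"
proof -
  have eq: "nonneg_orthant = (\<Inter>i. {x::real^'k. 0 \<le> x $ i})"
    by (auto simp: nonneg_orthant_def)
  have "closed {x::real^'k. 0 \<le> x $ i}" for i
    by (intro closed_Collect_le continuous_intros)
  then show ?thesis unfolding eq by (intro closed_INT ballI)
qed

lemma closed_norm1_le: "closed {y::real^'k. norm1 y \<le> M}"
  unfolding norm1_def by (intro closed_Collect_le continuous_intros)

lemma open_ball1: "open (ball1 \<rho> A)"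
proof -
  have eq: "ball1 \<rho> A = (\<Union>x\<in>A. {y. norm1 (y - x) < \<rho>})" by (auto simp: ball1_def)
  have "open {y. norm1 (y - x) < \<rho>}" for x :: "real^'k"
    unfolding norm1_def by (intro open_Collect_less continuous_intros)
  then show ?thesis unfolding eq by (intro open_UN ballI)
qed

lemma dist_Pair_component_le:
  fixes u p :: "(real^'k) \<times> real"
  assumes "dist u p \<le> \<eta>"
  shows "\<bar>fst u $ i - fst p $ i\<bar> \<le> \<eta>" "\<bar>snd u - snd p\<bar> \<le> \<eta>"
proof -
  have "\<bar>fst u $ i - fst p $ i\<bar> \<le> dist (fst u) (fst p)"
    using component_le_norm_cart[of "fst u - fst p" i] by (simp add: dist_norm)
  also have "\<dots> \<le> dist u p" by (rule dist_fst_le)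
  finally show "\<bar>fst u $ i - fst p $ i\<bar> \<le> \<eta>" using assms by simp
  have "\<bar>snd u - snd p\<bar> = dist (snd u) (snd p)" by (simp add: dist_real_def)
  also have "\<dots> \<le> dist u p" by (rule dist_snd_le)
  finally show "\<bar>snd u - snd p\<bar> \<le> \<eta>" using assms by simp
qed

lemma bounded_finite_net:
  fixes S :: "'a::euclidean_space set"
  assumes "bounded S" "0 < \<eta>"
  obtains F where "finite F" "F \<subseteq> S" "\<And>p. p \<in> S \<Longrightarrow> \<exists>u\<in>F. dist u p < \<eta>"
proof -
  have "closure S \<subseteq> (\<Union>c\<in>S. ball c \<eta>)"
  proof
    fix x assume "x \<in> closure S"
    then obtain y where "y \<in> S" "dist y x < \<eta>" using assms(2) closure_approachable by blast
    then show "x \<in> (\<Union>c\<in>S. ball c \<eta>)" by auto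
  qed
  then obtain F where "F \<subseteq> S" "finite F" "closure S \<subseteq> (\<Union>c\<in>F. ball c \<eta>)"
    using compactE_image[of "closure S" S "\<lambda>c. ball c \<eta>"] assms(1) by (auto simp: compact_closure)
  moreover from this(3) have "\<exists>u\<in>F. dist u p < \<eta>" if "p \<in> S" for p
    using closure_subset that by fastforce
  ultimately show ?thesis using that by blast
qed

section \<open>Incentive compatible mechanisms and revenue\<close>

lemma IC_IR_mechanismD:
  assumes "IC_IR_mechanism q s" "x \<in> nonneg_orthant"
  shows "0 \<le> q x $ i" "q x $ i \<le> 1" "s x \<le> q x \<bullet> x"
    "y \<in> nonneg_orthant \<Longrightarrow> q y \<bullet> x - s y \<le> q x \<bullet> x - s x"
  using assms unfolding IC_IR_mechanism_def buyer_payoff_def by auto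

lemma IC_IR_price_bounds:
  assumes m: "IC_IR_mechanism q s" and y: "y \<in> nonneg_orthant"
  shows "s 0 \<le> 0" "s 0 \<le> s y" "s y - s 0 \<le> norm1 y"
proof -
  show "s 0 \<le> 0" using IC_IR_mechanismD(3)[OF m zero_in_nonneg_orthant] by simp
  show "s 0 \<le> s y" using IC_IR_mechanismD(4)[OF m zero_in_nonneg_orthant y] by simp
  have "0 \<le> q 0 \<bullet> y"
    using IC_IR_mechanismD(1)[OF m zero_in_nonneg_orthant] y by (rule inner_nonneg_orthant)
  moreover have "\<bar>q y \<bullet> y\<bar> \<le> 1 * norm1 y"
    using IC_IR_mechanismD(1,2)[OF m y] by (intro abs_inner_le_norm1) (simp add: abs_le_iff)
  moreover have "q 0 \<bullet> y - s 0 \<le> q y \<bullet> y - s y"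
    using IC_IR_mechanismD(4)[OF m y zero_in_nonneg_orthant] .
  ultimately show "s y - s 0 \<le> norm1 y" by (simp add: abs_le_iff)
qed

definition revenues :: "'w measure \<Rightarrow> ('w \<Rightarrow> real^'k) \<Rightarrow> real set" where
  "revenues Omega X = {(\<integral>w. s (X w) \<partial>Omega) | q s.
     IC_IR_mechanism q s \<and> integrable Omega (\<lambda>w. s (X w))}"

lemma Rev_eq_Sup_revenues: "Rev Omega X = Sup (revenues Omega X)"
  unfolding Rev_def revenues_def ..

lemma IC_IR_zero_mechanism: "IC_IR_mechanism (\<lambda>x. 0) (\<lambda>x. 0)"
  unfolding IC_IR_mechanism_def buyer_payoff_def by simp

lemma zero_in_revenues: "0 \<in> revenues Omega X"
  unfolding revenues_def using IC_IR_zero_mechanism by force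

lemma revenues_le:
  assumes g: "good_random_valuation Omega X" and ae: "AE w in Omega. norm1 (X w) \<le> M"
    and r: "r \<in> revenues Omega X"
  shows "r \<le> M"
proof -
  interpret prob_space Omega using g by (simp add: good_random_valuation_def)
  obtain q s where m: "IC_IR_mechanism q s" and i: "integrable Omega (\<lambda>w. s (X w))"
    and r: "r = (\<integral>w. s (X w) \<partial>Omega)"
    using r unfolding revenues_def by auto
  have "AE w in Omega. s (X w) \<le> M"
    using ae AE_space
  proof eventually_elim
    case (elim w)
    then have x: "X w \<in> nonneg_orthant" using g by (simp add: good_random_valuation_def)
    have "s (X w) \<le> norm1 (X w)"
      using IC_IR_price_bounds[OF m x] by linarith
    then show ?case using elim by simp
  qed
  then have "(\<integral>w. s (X w) \<partial>Omega) \<le> (\<integral>w. M \<partial>Omega)"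
    by (intro integral_mono_AE i) simp_all
  then show ?thesis using r by (simp add: prob_space)
qed

lemma
  assumes "good_random_valuation Omega X" and "AE w in Omega. norm1 (X w) \<le> M"
  shows Rev_nonneg: "0 \<le> Rev Omega X"
    and Rev_le: "Rev Omega X \<le> M"
    and revenue_le_Rev: "IC_IR_mechanism q s \<Longrightarrow> integrable Omega (\<lambda>w. s (X w)) \<Longrightarrow>
      (\<integral>w. s (X w) \<partial>Omega) \<le> Rev Omega X"
proof -
  have bdd: "bdd_above (revenues Omega X)"
    using revenues_le[OF assms] by (intro bdd_aboveI) blast
  show "0 \<le> Rev Omega X"
    unfolding Rev_eq_Sup_revenues by (rule cSup_upper[OF zero_in_revenues bdd])
  show "Rev Omega X \<le> M"
    unfolding Rev_eq_Sup_revenues using revenues_le[OF assms] zero_in_revenues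
    by (intro cSup_least) auto
  assume "IC_IR_mechanism q s" "integrable Omega (\<lambda>w. s (X w))"
  then show "(\<integral>w. s (X w) \<partial>Omega) \<le> Rev Omega X"
    unfolding Rev_eq_Sup_revenues revenues_def by (intro cSup_upper[OF _ bdd[unfolded revenues_def]]) blast
qed

lemma Rev_leI:
  assumes "\<And>q s. IC_IR_mechanism q s \<Longrightarrow> integrable Omega (\<lambda>w. s (X w)) \<Longrightarrow>
      (\<integral>w. s (X w) \<partial>Omega) \<le> b"
  shows "Rev Omega X \<le> b"
  unfolding Rev_eq_Sup_revenues
proof (rule cSup_least)
  show "revenues Omega X \<noteq> {}" using zero_in_revenues by blast
  show "r \<le> b" if "r \<in> revenues Omega X" for r
    using that assms by (auto simp: revenues_def)
qed

section \<open>Finite menus with discounted prices\<close>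

definition menu_utility :: "(real^'k) \<times> real \<Rightarrow> real^'k \<Rightarrow> real" where
  "menu_utility p x = fst p \<bullet> x - snd p"

definition menu_choice :: "((real^'k) \<times> real) list \<Rightarrow> real^'k \<Rightarrow> nat" where
  "menu_choice os x = (LEAST i. i < length os \<and>
     (\<forall>j<length os. menu_utility (os ! j) x \<le> menu_utility (os ! i) x))"

definition menu_alloc :: "((real^'k) \<times> real) list \<Rightarrow> real^'k \<Rightarrow> real^'k" where
  "menu_alloc os x = fst (os ! menu_choice os x)"

definition menu_price :: "((real^'k) \<times> real) list \<Rightarrow> real^'k \<Rightarrow> real" where
  "menu_price os x = snd (os ! menu_choice os x)"

lemma menu_choice_maximizes:
  assumes "os \<noteq> []"
  shows "menu_choice os x < length os \<and>
    (\<forall>j<length os. menu_utility (os ! j) x \<le> menu_utility (os ! menu_choice os x) x)"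
proof -
  define f where "f j = menu_utility (os ! j) x" for j
  have "Max (f ` {..<length os}) \<in> f ` {..<length os}"
    using assms by (intro Max_in) auto
  then obtain i where i: "i < length os" "f i = Max (f ` {..<length os})" by auto
  then have "i < length os \<and> (\<forall>j<length os. f j \<le> f i)" by simp
  then show ?thesis unfolding menu_choice_def f_def by (rule LeastI)
qed

lemma menu_option_in_set:
  "os \<noteq> [] \<Longrightarrow> (menu_alloc os x, menu_price os x) \<in> set os"
  using menu_choice_maximizes[of os x] by (simp add: menu_alloc_def menu_price_def)

lemma menu_option_best:
  assumes "os \<noteq> []" "p \<in> set os"
  shows "menu_utility p x \<le> menu_alloc os x \<bullet> x - menu_price os x"
proof -
  obtain j where "j < length os" "p = os ! j" using assms(2) by (auto simp: in_set_conv_nth)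
  then show ?thesis
    using menu_choice_maximizes[OF assms(1), of x] by (simp add: menu_alloc_def menu_price_def menu_utility_def)
qed

lemma measurable_menu_choice: "menu_choice os \<in> measurable borel (count_space UNIV)"
  unfolding menu_choice_def menu_utility_def by measurable

lemma borel_measurable_menu_alloc: "menu_alloc os \<in> borel_measurable borel"
proof -
  have "(\<lambda>i. fst (os ! i)) \<in> measurable (count_space UNIV) borel" by simp
  from measurable_compose[OF measurable_menu_choice this] show ?thesis
    unfolding menu_alloc_def comp_def .
qed

lemma borel_measurable_menu_price: "menu_price os \<in> borel_measurable borel"
proof -
  have "(\<lambda>i. snd (os ! i)) \<in> measurable (count_space UNIV) borel" by simp
  from measurable_compose[OF measurable_menu_choice this] show ?thesis
    unfolding menu_price_def comp_def .
qed

lemma IC_IR_menu: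
  fixes os :: "((real^'k) \<times> real) list"
  assumes ne: "os \<noteq> []"
    and alloc: "\<And>p i. p \<in> set os \<Longrightarrow> 0 \<le> fst p $ i \<and> fst p $ i \<le> 1"
    and outside: "p0 \<in> set os" "snd p0 \<le> 0"
  shows "IC_IR_mechanism (menu_alloc os) (menu_price os)"
  unfolding IC_IR_mechanism_def buyer_payoff_def
proof (intro conjI ballI allI borel_measurable_menu_alloc borel_measurable_menu_price)
  fix x y :: "real^'k" and i
  show "0 \<le> menu_alloc os x $ i" "menu_alloc os x $ i \<le> 1"
    using alloc[OF menu_option_in_set[OF ne]] by auto
  assume x: "x \<in> nonneg_orthant"
  have "0 \<le> menu_utility p0 x"
    using alloc[OF outside(1)] x outside(2) inner_nonneg_orthant[of "fst p0" x]
    by (simp add: menu_utility_def)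
  then show "0 \<le> menu_alloc os x \<bullet> x - menu_price os x"
    using menu_option_best[OF ne outside(1), of x] by linarith
  show "menu_alloc os y \<bullet> x - menu_price os y \<le> menu_alloc os x \<bullet> x - menu_price os x"
    using menu_option_best[OF ne menu_option_in_set[OF ne]] by (simp add: menu_utility_def)
qed

definition discount :: "real \<Rightarrow> ((real^'k) \<times> real) list \<Rightarrow> ((real^'k) \<times> real) list" where
  "discount e os = map (\<lambda>(a, p). (a, (1 - e) * p)) os"

lemma set_discount: "set (discount e os) = (\<lambda>(a, p). (a, (1 - e) * p)) ` set os"
  by (simp add: discount_def)

text \<open>The option (a, c) is the one chosen at y; u is a menu option close to it. At the discounted
  menu, choosing at x an option v cheaper than c costs the buyer e (c - snd v) in utility, which
  the gains from the perturbations x - y and u - (a, c) cannot compensate.\<close>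

lemma discount_menu_price_ge:
  fixes os :: "((real^'k) \<times> real) list" and x y a :: "real^'k"
  assumes ne: "os \<noteq> []"
    and alloc: "\<And>p i. p \<in> set os \<Longrightarrow> 0 \<le> fst p $ i \<and> fst p $ i \<le> 1"
    and a: "\<And>i. 0 \<le> a $ i \<and> a $ i \<le> 1"
    and best: "\<And>p. p \<in> set os \<Longrightarrow> menu_utility p y \<le> menu_utility (a, c) y"
    and u: "u \<in> set os" "dist u (a, c) \<le> \<eta>"
    and e: "0 < e" "e < 1" and cM: "c \<le> M" and xM: "norm1 x \<le> M" and xy: "norm1 (x - y) < \<rho>"
  shows "c - e * M - (\<rho> + \<eta> * (1 + M)) / e \<le> menu_price (discount e os) x"
proof -
  define K where "K = (\<rho> + \<eta> * (1 + M)) / e"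
  have ne': "discount e os \<noteq> []" using ne by (simp add: discount_def)
  obtain v where v: "v \<in> set os" and chosen: "menu_alloc (discount e os) x = fst v"
      "menu_price (discount e os) x = (1 - e) * snd v"
    using menu_option_in_set[OF ne', of x] by (auto simp: set_discount)
  have "(fst u, (1 - e) * snd u) \<in> set (discount e os)"
    using u(1) unfolding set_discount by (force simp: case_prod_beta)
  from menu_option_best[OF ne' this, of x]
  have choice: "fst u \<bullet> x - (1 - e) * snd u \<le> fst v \<bullet> x - (1 - e) * snd v"
    by (simp add: chosen menu_utility_def)
  have IC: "fst v \<bullet> y - snd v \<le> a \<bullet> y - c"
    using best[OF v] by (simp add: menu_utility_def)
  have \<eta>: "0 \<le> \<eta>" using u(2) zero_le_dist order_trans by blast
  have perturb_valuation: "\<bar>(fst v - a) \<bullet> (x - y)\<bar> \<le> 1 * norm1 (x - y)"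
  proof (rule abs_inner_le_norm1)
    fix i
    show "\<bar>(fst v - a) $ i\<bar> \<le> 1" using alloc[OF v, of i] a[of i] by (simp add: abs_le_iff)
  qed
  have perturb_alloc: "\<bar>(a - fst u) \<bullet> x\<bar> \<le> \<eta> * M"
  proof -
    have "\<bar>(a - fst u) \<bullet> x\<bar> \<le> \<eta> * norm1 x"
      using dist_Pair_component_le(1)[OF u(2)] by (intro abs_inner_le_norm1) (simp add: abs_minus_commute)
    also have "\<dots> \<le> \<eta> * M" using xM \<eta> by (rule mult_left_mono)
    finally show ?thesis .
  qed
  have perturb_price: "(1 - e) * snd u \<le> (1 - e) * c + \<eta>"
  proof -
    have "(1 - e) * snd u \<le> (1 - e) * (c + \<eta>)"
      using dist_Pair_component_le(2)[OF u(2)] e by (intro mult_left_mono) auto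
    also have "\<dots> \<le> (1 - e) * c + \<eta>" using e \<eta> by (simp add: algebra_simps mult_left_le_one_le)
    finally show ?thesis .
  qed
  have "fst v \<bullet> x - fst u \<bullet> x = (fst v - a) \<bullet> (x - y) + (fst v \<bullet> y - a \<bullet> y) + (a - fst u) \<bullet> x"
    by (simp add: inner_diff_left inner_diff_right)
  then have "e * c - (\<rho> + \<eta> * (1 + M)) \<le> e * snd v"
    using choice IC perturb_valuation perturb_alloc perturb_price xy
    by (simp add: algebra_simps abs_le_iff)
  then have "c - K \<le> snd v" using e unfolding K_def by (simp add: field_simps)
  then have "(1 - e) * (c - K) \<le> menu_price (discount e os) x"
    unfolding chosen(2) using e by (intro mult_left_mono) auto
  moreover have "0 \<le> K"
    unfolding K_def using e \<eta> xy norm1_nonneg[of "x - y"] xM norm1_nonneg[of x] by simp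
  then have "0 \<le> e * K" using e by simp
  moreover have "e * c \<le> e * M" using cM e by simp
  moreover have "(1 - e) * (c - K) = c - K - e * c + e * K" by (simp add: algebra_simps)
  ultimately show ?thesis unfolding K_def by linarith
qed

definition normalized_option_set ::
    "(real^'k \<Rightarrow> real^'k) \<Rightarrow> (real^'k \<Rightarrow> real) \<Rightarrow> real \<Rightarrow> ((real^'k) \<times> real) set" where
  "normalized_option_set q s M = (\<lambda>y. (q y, s y - s 0)) ` {y \<in> nonneg_orthant. norm1 y \<le> M}"

lemma normalized_option_set:
  assumes m: "IC_IR_mechanism q s" and p: "p \<in> normalized_option_set q s M"
  shows "0 \<le> fst p $ i \<and> fst p $ i \<le> 1" and "0 \<le> snd p \<and> snd p \<le> M"
    and "y \<in> nonneg_orthant \<Longrightarrow> menu_utility p y \<le> menu_utility (q y, s y - s 0) y"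
proof -
  obtain z where z: "z \<in> nonneg_orthant" "norm1 z \<le> M" "p = (q z, s z - s 0)"
    using p unfolding normalized_option_set_def by auto
  show "0 \<le> fst p $ i \<and> fst p $ i \<le> 1" using IC_IR_mechanismD(1,2)[OF m z(1)] z(3) by simp
  show "0 \<le> snd p \<and> snd p \<le> M" using IC_IR_price_bounds(2,3)[OF m z(1)] z by simp
  show "menu_utility p y \<le> menu_utility (q y, s y - s 0) y" if "y \<in> nonneg_orthant"
    using IC_IR_mechanismD(4)[OF m that z(1)] z(3) by (simp add: menu_utility_def)
qed

lemma bounded_normalized_option_set:
  assumes "IC_IR_mechanism q s"
  shows "bounded (normalized_option_set q s M)"
proof (rule bounded_subset[OF bounded_Times[OF bounded_cbox bounded_closed_interval]])
  show "normalized_option_set q s M \<subseteq> cbox 0 1 \<times> {0..M}"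
    using normalized_option_set(1,2)[OF assms] by (auto simp: mem_box_cart)
qed

text \<open>The net makes the menu finite, so that the buyer's choice is well defined and Borel.\<close>

lemma robust_finite_menu:
  fixes q :: "real^'k \<Rightarrow> real^'k" and s :: "real^'k \<Rightarrow> real"
  assumes m: "IC_IR_mechanism q s" and e: "0 < e" "e < 1" and \<eta>: "0 < \<eta>" and M: "0 \<le> M"
  obtains q' s' where "IC_IR_mechanism q' s'" and "\<And>x. 0 \<le> s' x \<and> s' x \<le> M"
    and "\<And>x y \<rho>. y \<in> nonneg_orthant \<Longrightarrow> norm1 y \<le> M \<Longrightarrow> norm1 x \<le> M \<Longrightarrow> norm1 (x - y) < \<rho> \<Longrightarrow>
      s y - s 0 - e * M - (\<rho> + \<eta> * (1 + M)) / e \<le> s' x"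
proof -
  define S where "S = normalized_option_set q s M"
  note S = normalized_option_set[OF m, where M = M, folded S_def]
  obtain F where F: "finite F" "F \<subseteq> S" "\<And>p. p \<in> S \<Longrightarrow> \<exists>u\<in>F. dist u p < \<eta>"
    using bounded_finite_net[OF bounded_normalized_option_set[OF m] \<eta>] unfolding S_def by blast
  have outside: "(q 0, 0) \<in> S"
    unfolding S_def normalized_option_set_def using M by (force simp: norm1_def)
  obtain os where os: "set os = insert (q 0, 0) F"
    using finite_list F(1) by (meson finite_insert)
  have ne: "os \<noteq> []" and osS: "set os \<subseteq> S" using os F(2) outside by auto
  show ?thesis
  proof
    have "(q 0, 0) \<in> set (discount e os)"
      unfolding set_discount os by force
    moreover have "0 \<le> fst p $ i \<and> fst p $ i \<le> 1" if "p \<in> set (discount e os)" for p i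
      using that osS S(1) unfolding set_discount by auto
    ultimately show "IC_IR_mechanism (menu_alloc (discount e os)) (menu_price (discount e os))"
      using ne by (intro IC_IR_menu) (auto simp: discount_def)
  next
    fix x
    have "discount e os \<noteq> []" using ne by (simp add: discount_def)
    from menu_option_in_set[OF this, of x] obtain v
      where v: "v \<in> S" "menu_price (discount e os) x = (1 - e) * snd v"
      using osS unfolding set_discount by auto
    then have "(1 - e) * snd v \<le> snd v" using e S(2) by (simp add: mult_left_le_one_le)
    with v e S(2)[OF v(1)] show "0 \<le> menu_price (discount e os) x \<and> menu_price (discount e os) x \<le> M"
      by simp
  next
    fix x y :: "real^'k" and \<rho> :: real
    assume y: "y \<in> nonneg_orthant" and yM: "norm1 y \<le> M" and xM: "norm1 x \<le> M"
      and xy: "norm1 (x - y) < \<rho>"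
    have "(q y, s y - s 0) \<in> S" unfolding S_def normalized_option_set_def using y yM by auto
    then obtain u where u: "u \<in> F" "dist u (q y, s y - s 0) < \<eta>" using F(3) by blast
    show "s y - s 0 - e * M - (\<rho> + \<eta> * (1 + M)) / e \<le> menu_price (discount e os) x"
    proof (rule discount_menu_price_ge[OF ne _ _ _ _ _ e _ xM xy])
      show "0 \<le> fst p $ i \<and> fst p $ i \<le> 1" if "p \<in> set os" for p i
        using that osS S(1) by blast
      show "0 \<le> q y $ i \<and> q y $ i \<le> 1" for i using IC_IR_mechanismD(1,2)[OF m y] by simp
      show "menu_utility p y \<le> menu_utility (q y, s y - s 0) y" if "p \<in> set os" for p
        using that osS S(3) y by blast
      show "u \<in> set os" using u os by simp
      show "dist u (q y, s y - s 0) \<le> \<eta>" using u by simp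
      show "s y - s 0 \<le> M" using IC_IR_price_bounds(3)[OF m y] yM by simp
    qed
  qed
qed

section \<open>Layer-cake estimates\<close>

lemma le_level_count:
  fixes v h :: real
  assumes "0 \<le> v" "v \<le> real N * h" "0 < h"
  shows "v \<le> h * (\<Sum>j<N. if real j * h < v then 1 else 0)"
  using assms(2)
proof (induction N)
  case 0
  then show ?case using assms(1) by simp
next
  case (Suc N)
  show ?case
  proof (cases "v \<le> real N * h")
    case True
    then have "v \<le> h * (\<Sum>j<N. if real j * h < v then 1 else 0)" by (rule Suc.IH)
    also have "\<dots> \<le> h * (\<Sum>j<Suc N. if real j * h < v then 1 else 0)"
      using assms(3) by (intro mult_left_mono) auto
    finally show ?thesis .
  next
    case False
    have "real j * h < v" if "j < Suc N" for j
    proof -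
      have "real j * h \<le> real N * h" using that assms(3) by (intro mult_right_mono) auto
      then show ?thesis using False by linarith
    qed
    then have "(\<Sum>j<Suc N. if real j * h < v then 1 else 0) = real (Suc N)" by simp
    then show ?thesis using Suc.prems by (simp add: algebra_simps)
  qed
qed

lemma level_count_le:
  fixes w h \<delta> :: real
  assumes "0 \<le> w + \<delta>" "0 < h"
  shows "h * (\<Sum>j<N. if real j * h - \<delta> < w then 1 else 0) \<le> w + \<delta> + h"
proof (induction N)
  case 0
  then show ?case using assms by simp
next
  case (Suc N)
  show ?case
  proof (cases "real N * h - \<delta> < w")
    case False
    then show ?thesis using Suc.IH by simp
  next
    case True
    have "(\<Sum>j<Suc N. if real j * h - \<delta> < w then 1 else 0) \<le> (\<Sum>j<Suc N. 1 :: real)"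
      by (intro sum_mono) auto
    then have "h * (\<Sum>j<Suc N. if real j * h - \<delta> < w then 1 else 0) \<le> real N * h + h"
      using assms(2) mult_left_mono by (fastforce simp: algebra_simps)
    then show ?thesis using True by linarith
  qed
qed

context prob_space
begin

lemma integral_sum_level_indicators:
  fixes f :: "'a \<Rightarrow> real" and c :: "nat \<Rightarrow> real"
  assumes "f \<in> borel_measurable M"
  defines "E j \<equiv> {w \<in> space M. c j < f w}"
  shows "integrable M (\<lambda>w. \<Sum>j<N. (indicator (E j) w :: real))"
    and "(\<integral>w. (\<Sum>j<N. indicator (E j) w) \<partial>M) = (\<Sum>j<N. prob (E j))"
proof -
  have E: "E j \<in> events" for j unfolding E_def using assms(1) by measurable
  have ind: "integrable M (indicator (E j) :: _ \<Rightarrow> real)" for j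
    by (intro integrable_real_indicator E) (simp add: less_top[symmetric])
  then show "integrable M (\<lambda>w. \<Sum>j<N. (indicator (E j) w :: real))" by auto
  have "(\<integral>w. (\<Sum>j<N. indicator (E j) w) \<partial>M) = (\<Sum>j<N. (\<integral>w. indicator (E j) w \<partial>M) :: real)"
    using ind by (intro Bochner_Integration.integral_sum) auto
  also have "\<dots> = (\<Sum>j<N. prob (E j))" using E by simp
  finally show "(\<integral>w. (\<Sum>j<N. indicator (E j) w) \<partial>M) = (\<Sum>j<N. prob (E j))" .
qed

lemma integral_le_level_sum:
  assumes f: "integrable M f" and ae: "AE w in M. 0 \<le> f w \<and> f w \<le> real N * h" and h: "0 < h"
  shows "integral\<^sup>L M f \<le> h * (\<Sum>j<N. prob {w \<in> space M. real j * h < f w})"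
proof -
  note level = integral_sum_level_indicators[OF borel_measurable_integrable[OF f], of "\<lambda>j. real j * h" N]
  have "AE w in M. f w \<le> h * (\<Sum>j<N. indicator {w \<in> space M. real j * h < f w} w)"
    using ae AE_space
  proof eventually_elim
    case (elim w)
    have "f w \<le> h * (\<Sum>j<N. if real j * h < f w then 1 else 0)"
      using elim h by (intro le_level_count) auto
    also have "(\<Sum>j<N. if real j * h < f w then 1 else 0)
        = (\<Sum>j<N. indicator {w \<in> space M. real j * h < f w} w)"
      using elim by (intro sum.cong refl) (simp add: indicator_def)
    finally show ?case .
  qed
  then have "integral\<^sup>L M f \<le> (\<integral>w. h * (\<Sum>j<N. indicator {w \<in> space M. real j * h < f w} w) \<partial>M)"
    by (intro integral_mono_AE f integrable_mult_right level(1))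
  then show ?thesis using level(2) by simp
qed

lemma level_sum_le_integral:
  assumes f: "integrable M f" and ae: "AE w in M. 0 \<le> f w" and h: "0 < h" and \<delta>: "0 \<le> \<delta>"
  shows "h * (\<Sum>j<N. prob {w \<in> space M. real j * h - \<delta> < f w}) \<le> integral\<^sup>L M f + \<delta> + h"
proof -
  note level = integral_sum_level_indicators[OF borel_measurable_integrable[OF f], of "\<lambda>j. real j * h - \<delta>" N]
  have "AE w in M. h * (\<Sum>j<N. indicator {w \<in> space M. real j * h - \<delta> < f w} w) \<le> f w + (\<delta> + h)"
    using ae AE_space
  proof eventually_elim
    case (elim w)
    have "(\<Sum>j<N. indicator {w \<in> space M. real j * h - \<delta> < f w} w)
        = (\<Sum>j<N. if real j * h - \<delta> < f w then 1 else 0)"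
      using elim by (intro sum.cong refl) (simp add: indicator_def)
    also have "h * \<dots> \<le> f w + \<delta> + h"
      using elim h \<delta> by (intro level_count_le) auto
    finally show ?case by simp
  qed
  then have "(\<integral>w. h * (\<Sum>j<N. indicator {w \<in> space M. real j * h - \<delta> < f w} w) \<partial>M)
      \<le> (\<integral>w. f w + (\<delta> + h) \<partial>M)"
    by (intro integral_mono_AE f Bochner_Integration.integrable_add integrable_mult_right level(1)
      integrable_const)
  then show ?thesis using level(2) f by (simp add: prob_space)
qed

end

lemma integral_le_of_shifted_tails:
  assumes P: "prob_space P" and Q: "prob_space Q"
    and f: "integrable P f" "AE w in P. 0 \<le> f w \<and> f w \<le> B"
    and g: "integrable Q g" "AE w in Q. 0 \<le> g w"
    and B: "0 < B" and \<delta>: "0 \<le> \<delta>"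
    and tail: "\<And>t. measure P {w \<in> space P. t < f w} \<le> measure Q {w \<in> space Q. t - \<delta> < g w} + \<rho>"
  shows "integral\<^sup>L P f \<le> integral\<^sup>L Q g + \<delta> + B * \<rho>"
proof (rule field_le_epsilon)
  fix \<xi> :: real assume \<xi>: "0 < \<xi>"
  obtain N :: nat where N: "B / \<xi> < real N" using reals_Archimedean2 by blast
  moreover have "0 < B / \<xi>" using B \<xi> by simp
  ultimately have N0: "0 < real N" by linarith
  define h where "h = B / real N"
  have h: "0 < h" "h \<le> \<xi>" "real N * h = B"
    using B \<xi> N N0 unfolding h_def by (auto simp: field_simps)
  have "integral\<^sup>L P f \<le> h * (\<Sum>j<N. measure P {w \<in> space P. real j * h < f w})"
    using f h by (intro prob_space.integral_le_level_sum[OF P]) auto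
  also have "\<dots> \<le> h * (\<Sum>j<N. measure Q {w \<in> space Q. real j * h - \<delta> < g w} + \<rho>)"
    using h tail by (intro mult_left_mono sum_mono) auto
  also have "\<dots> = h * (\<Sum>j<N. measure Q {w \<in> space Q. real j * h - \<delta> < g w}) + B * \<rho>"
    using h by (simp add: sum.distrib algebra_simps)
  also have "\<dots> \<le> integral\<^sup>L Q g + \<delta> + h + B * \<rho>"
    using g h \<delta> prob_space.level_sum_le_integral[OF Q] by simp
  finally show "integral\<^sup>L P f \<le> integral\<^sup>L Q g + \<delta> + B * \<rho> + \<xi>" using h by simp
qed

section \<open>Revenue under Prohorov perturbations\<close>

lemma tail_le_prohorov_shift:
  fixes X :: "'w \<Rightarrow> real^'k" and Y :: "'v \<Rightarrow> real^'k" and F G :: "real^'k \<Rightarrow> real"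
  assumes P1: "prob_space Omega1" and P2: "prob_space Omega2"
    and X: "X \<in> borel_measurable Omega1" and Y: "Y \<in> borel_measurable Omega2"
    and proh: "\<And>A. A \<in> sets borel \<Longrightarrow>
      measure (distr Omega2 borel Y) A \<le> measure (distr Omega1 borel X) (ball1 \<rho> A) + \<rho>"
    and C: "C \<in> sets borel" "AE w in Omega1. X w \<in> C" "AE w in Omega2. Y w \<in> C"
    and F: "F \<in> borel_measurable borel" and G: "G \<in> borel_measurable borel"
    and shift: "\<And>x y. x \<in> C \<Longrightarrow> y \<in> C \<Longrightarrow> norm1 (x - y) < \<rho> \<Longrightarrow> F y - \<delta> \<le> G x"
  shows "measure Omega2 {w \<in> space Omega2. t < F (Y w)}
    \<le> measure Omega1 {w \<in> space Omega1. t - \<delta> < G (X w)} + \<rho>"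
proof -
  interpret P1: prob_space Omega1 by (rule P1)
  interpret P2: prob_space Omega2 by (rule P2)
  define A where "A = C \<inter> {y. t < F y}"
  have A: "A \<in> sets borel"
    unfolding A_def using C(1) F by measurable
  have B: "ball1 \<rho> A \<in> sets borel" by (intro borel_open open_ball1)
  have "measure Omega2 {w \<in> space Omega2. t < F (Y w)} \<le> measure Omega2 (Y -` A \<inter> space Omega2)"
    using C(3) by (intro P2.finite_measure_mono_AE measurable_sets[OF Y A])
      (auto elim!: eventually_mono simp: A_def)
  also have "\<dots> = measure (distr Omega2 borel Y) A" by (simp add: measure_distr[OF Y A])
  also have "\<dots> \<le> measure (distr Omega1 borel X) (ball1 \<rho> A) + \<rho>" by (rule proh[OF A])
  also have "measure (distr Omega1 borel X) (ball1 \<rho> A) = measure Omega1 (X -` ball1 \<rho> A \<inter> space Omega1)"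
    by (simp add: measure_distr[OF X B])
  also have "\<dots> \<le> measure Omega1 {w \<in> space Omega1. t - \<delta> < G (X w)}"
  proof (intro P1.finite_measure_mono_AE)
    show "{w \<in> space Omega1. t - \<delta> < G (X w)} \<in> P1.events" using X G by measurable
    show "AE w in Omega1. w \<in> X -` ball1 \<rho> A \<inter> space Omega1 \<longrightarrow> w \<in> {w \<in> space Omega1. t - \<delta> < G (X w)}"
      using C(2)
    proof eventually_elim
      case (elim w)
      show ?case
      proof
        assume w: "w \<in> X -` ball1 \<rho> A \<inter> space Omega1"
        then obtain y where "y \<in> A" "norm1 (X w - y) < \<rho>" unfolding ball1_def by auto
        with elim shift[of "X w" y] w show "w \<in> {w \<in> space Omega1. t - \<delta> < G (X w)}"
          unfolding A_def by auto
      qed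
    qed
  qed
  finally show ?thesis by simp
qed

lemma integral_le_of_prohorov_shift:
  fixes X :: "'w \<Rightarrow> real^'k" and Y :: "'v \<Rightarrow> real^'k" and F G :: "real^'k \<Rightarrow> real"
  assumes P1: "prob_space Omega1" and P2: "prob_space Omega2"
    and X: "X \<in> borel_measurable Omega1" and Y: "Y \<in> borel_measurable Omega2"
    and proh: "\<And>A. A \<in> sets borel \<Longrightarrow>
      measure (distr Omega2 borel Y) A \<le> measure (distr Omega1 borel X) (ball1 \<rho> A) + \<rho>"
    and C: "C \<in> sets borel" "AE w in Omega1. X w \<in> C" "AE w in Omega2. Y w \<in> C"
    and F: "F \<in> borel_measurable borel" "\<And>y. y \<in> C \<Longrightarrow> 0 \<le> F y \<and> F y \<le> B"
    and G: "G \<in> borel_measurable borel" "\<And>x. 0 \<le> G x" "integrable Omega1 (\<lambda>w. G (X w))"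
    and B: "0 < B" and \<delta>: "0 \<le> \<delta>"
    and shift: "\<And>x y. x \<in> C \<Longrightarrow> y \<in> C \<Longrightarrow> norm1 (x - y) < \<rho> \<Longrightarrow> F y - \<delta> \<le> G x"
  shows "(\<integral>w. F (Y w) \<partial>Omega2) \<le> (\<integral>w. G (X w) \<partial>Omega1) + \<delta> + B * \<rho>"
proof -
  interpret P2: prob_space Omega2 by (rule P2)
  have F_bounds: "AE w in Omega2. 0 \<le> F (Y w) \<and> F (Y w) \<le> B"
    using C(3) by eventually_elim (rule F(2))
  then have "AE w in Omega2. norm (F (Y w)) \<le> B" by eventually_elim auto
  then have "integrable Omega2 (\<lambda>w. F (Y w))"
    using F(1) Y by (intro P2.integrable_const_bound[where B = B]) auto
  then show ?thesis
  proof (rule integral_le_of_shifted_tails[OF P2 P1 _ _ G(3) _ B \<delta>])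
    show "AE w in Omega2. 0 \<le> F (Y w) \<and> F (Y w) \<le> B" by (rule F_bounds)
    show "AE w in Omega1. 0 \<le> G (X w)" using G(2) by simp
    show "measure Omega2 {w \<in> space Omega2. t < F (Y w)}
        \<le> measure Omega1 {w \<in> space Omega1. t - \<delta> < G (X w)} + \<rho>" for t
      by (rule tail_le_prohorov_shift[OF P1 P2 X Y proh C F(1) G(1) shift])
  qed
qed

lemma revenue_le_Rev_of_prohorov:
  fixes X :: "'w \<Rightarrow> real^'k" and Y :: "'v \<Rightarrow> real^'k"
  assumes gX: "good_random_valuation Omega1 X" and gY: "good_random_valuation Omega2 Y"
    and M: "0 < M"
    and aeX: "AE w in Omega1. norm1 (X w) \<le> M" and aeY: "AE w in Omega2. norm1 (Y w) \<le> M"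
    and \<rho>: "0 < \<rho>"
    and proh: "\<And>A. A \<in> sets borel \<Longrightarrow>
      measure (distr Omega2 borel Y) A \<le> measure (distr Omega1 borel X) (ball1 \<rho> A) + \<rho>"
    and m: "IC_IR_mechanism q s" and si: "integrable Omega2 (\<lambda>w. s (Y w))"
    and e: "0 < e" "e < 1" and \<eta>: "0 < \<eta>"
  shows "(\<integral>w. s (Y w) \<partial>Omega2) \<le> Rev Omega1 X + e * M + (\<rho> + \<eta> * (1 + M)) / e + M * \<rho>"
proof -
  have P1: "prob_space Omega1" and X: "X \<in> borel_measurable Omega1"
    and X_orthant: "\<And>w. w \<in> space Omega1 \<Longrightarrow> X w \<in> nonneg_orthant"
    and P2: "prob_space Omega2" and Y: "Y \<in> borel_measurable Omega2"
    and Y_orthant: "\<And>w. w \<in> space Omega2 \<Longrightarrow> Y w \<in> nonneg_orthant"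
    using gX gY unfolding good_random_valuation_def by auto
  interpret P1: prob_space Omega1 by (rule P1)
  interpret P2: prob_space Omega2 by (rule P2)
  obtain q' s' where m': "IC_IR_mechanism q' s'" and s'_bounds: "\<And>x. 0 \<le> s' x \<and> s' x \<le> M"
    and robust: "\<And>x y \<rho>. y \<in> nonneg_orthant \<Longrightarrow> norm1 y \<le> M \<Longrightarrow> norm1 x \<le> M \<Longrightarrow>
      norm1 (x - y) < \<rho> \<Longrightarrow> s y - s 0 - e * M - (\<rho> + \<eta> * (1 + M)) / e \<le> s' x"
    using robust_finite_menu[OF m e \<eta> less_imp_le[OF M]] by blast
  have s_measurable: "s \<in> borel_measurable borel" and s'_measurable: "s' \<in> borel_measurable borel"
    using m m' unfolding IC_IR_mechanism_def by auto
  have s'X_integrable: "integrable Omega1 (\<lambda>w. s' (X w))"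
    using s'_bounds X s'_measurable by (intro P1.integrable_const_bound[where B = M]) auto
  define C :: "(real^'k) set" where "C = {y \<in> nonneg_orthant. norm1 y \<le> M}"
  have "C = nonneg_orthant \<inter> {y. norm1 y \<le> M}" unfolding C_def by auto
  then have C: "C \<in> sets borel"
    by (simp add: borel_closed closed_Int closed_nonneg_orthant closed_norm1_le)
  have "(\<integral>w. s (Y w) \<partial>Omega2) \<le> (\<integral>w. s (Y w) - s 0 \<partial>Omega2)"
    using si IC_IR_price_bounds(1)[OF m zero_in_nonneg_orthant] by (simp add: P2.prob_space)
  also have "\<dots> \<le> (\<integral>w. s' (X w) \<partial>Omega1) + (e * M + (\<rho> + \<eta> * (1 + M)) / e) + M * \<rho>"
  proof (rule integral_le_of_prohorov_shift[OF P1 P2 X Y proh C _ _ _ _ s'_measurable _ s'X_integrable M])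
    show "AE w in Omega1. X w \<in> C"
      using aeX AE_space by eventually_elim (simp add: C_def X_orthant)
    show "AE w in Omega2. Y w \<in> C"
      using aeY AE_space by eventually_elim (simp add: C_def Y_orthant)
    show "(\<lambda>y. s y - s 0) \<in> borel_measurable borel" using s_measurable by measurable
    show "0 \<le> s y - s 0 \<and> s y - s 0 \<le> M" if "y \<in> C" for y
      using that IC_IR_price_bounds(2,3)[OF m] unfolding C_def by fastforce
    show "0 \<le> e * M + (\<rho> + \<eta> * (1 + M)) / e" using e \<eta> \<rho> M by simp
    show "s y - s 0 - (e * M + (\<rho> + \<eta> * (1 + M)) / e) \<le> s' x"
      if "x \<in> C" "y \<in> C" "norm1 (x - y) < \<rho>" for x y
      using robust[of y x \<rho>] that unfolding C_def by simp
  qed (use s'_bounds in auto)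
  also have "(\<integral>w. s' (X w) \<partial>Omega1) \<le> Rev Omega1 X"
    using revenue_le_Rev[OF gX aeX m' s'X_integrable] .
  finally show ?thesis by simp
qed

lemma Rev_le_Rev_add_sqrt:
  fixes X :: "'w \<Rightarrow> real^'k" and Y :: "'v \<Rightarrow> real^'k"
  assumes gX: "good_random_valuation Omega1 X" and gY: "good_random_valuation Omega2 Y"
    and M: "1 \<le> M"
    and aeX: "AE w in Omega1. norm1 (X w) \<le> M" and aeY: "AE w in Omega2. norm1 (Y w) \<le> M"
    and \<rho>: "0 < \<rho>"
    and proh: "\<And>A. A \<in> sets borel \<Longrightarrow>
      measure (distr Omega2 borel Y) A \<le> measure (distr Omega1 borel X) (ball1 \<rho> A) + \<rho>"
  shows "Rev Omega2 Y \<le> Rev Omega1 X + (2 * M + 1) * sqrt \<rho>"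
proof (cases "\<rho> < 1")
  case False
  then have "2 * M + 1 \<le> (2 * M + 1) * sqrt \<rho>"
    using M mult_left_mono[of 1 "sqrt \<rho>" "2 * M + 1"] by simp
  then show ?thesis
    using Rev_le[OF gY aeY] Rev_nonneg[OF gX aeX] M by linarith
next
  case True
  define e where "e = sqrt \<rho>"
  have e: "0 < e" "e < 1" and \<rho>_eq: "\<rho> = e * e"
    using \<rho> True real_sqrt_less_mono[of \<rho> 1] unfolding e_def by auto
  have "M * \<rho> \<le> M * e"
    using e M unfolding \<rho>_eq by (intro mult_left_mono) (auto simp: mult_less_cancel_right1 less_imp_le)
  show ?thesis
  proof (rule Rev_leI)
    fix q s assume m: "IC_IR_mechanism q s" and si: "integrable Omega2 (\<lambda>w. s (Y w))"
    show "(\<integral>w. s (Y w) \<partial>Omega2) \<le> Rev Omega1 X + (2 * M + 1) * sqrt \<rho>"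
    proof (rule field_le_epsilon)
      fix \<xi> :: real assume \<xi>: "0 < \<xi>"
      define \<eta> where "\<eta> = \<xi> * e / (1 + M)"
      have \<eta>: "0 < \<eta>" unfolding \<eta>_def using \<xi> e M by simp
      have "\<eta> * (1 + M) = \<xi> * e" unfolding \<eta>_def using M by simp
      then have "(\<rho> + \<eta> * (1 + M)) / e = e + \<xi>"
        unfolding \<rho>_eq using e by (simp add: field_simps)
      moreover have "(\<integral>w. s (Y w) \<partial>Omega2) \<le> Rev Omega1 X + e * M + (\<rho> + \<eta> * (1 + M)) / e + M * \<rho>"
        using M by (intro revenue_le_Rev_of_prohorov[OF gX gY _ aeX aeY \<rho> proh m si e \<eta>]) simp
      ultimately show "(\<integral>w. s (Y w) \<partial>Omega2) \<le> Rev Omega1 X + (2 * M + 1) * sqrt \<rho> + \<xi>"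
        using \<open>M * \<rho> \<le> M * e\<close> unfolding e_def[symmetric] by (simp add: algebra_simps)
    qed
  qed
qed

lemma le_sqrt_prohorovI:
  assumes P: "prob_space P" and Q: "prob_space Q" and c: "0 < c"
    and le: "\<And>\<rho>. 0 < \<rho> \<Longrightarrow> \<forall>A\<in>sets borel. measure P A \<le> measure Q (ball1 \<rho> A) + \<rho> \<and>
      measure Q A \<le> measure P (ball1 \<rho> A) + \<rho> \<Longrightarrow> a \<le> c * sqrt \<rho>"
  shows "a \<le> c * sqrt (prohorov P Q)"
proof -
  define S where "S = {\<rho>. \<rho> > 0 \<and> (\<forall>A\<in>sets borel.
    measure P A \<le> measure Q (ball1 \<rho> A) + \<rho> \<and> measure Q A \<le> measure P (ball1 \<rho> A) + \<rho>)}"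
  have "1 \<in> S"
    unfolding S_def using prob_space.prob_le_1[OF P] prob_space.prob_le_1[OF Q]
    by (auto intro: add_increasing)
  then have S: "S \<noteq> {}" by blast
  have "0 \<le> prohorov P Q"
    unfolding prohorov_def S_def[symmetric] using S by (intro cInf_greatest) (auto simp: S_def)
  show ?thesis
  proof (cases "a \<le> 0")
    case True
    moreover have "0 \<le> c * sqrt (prohorov P Q)" using \<open>0 \<le> prohorov P Q\<close> c by simp
    ultimately show ?thesis by linarith
  next
    case False
    have "(a / c)\<^sup>2 \<le> \<rho>" if "\<rho> \<in> S" for \<rho>
    proof -
      have "a / c \<le> sqrt \<rho>" using le[of \<rho>] that c by (auto simp: S_def field_simps)
      then have "(a / c)\<^sup>2 \<le> (sqrt \<rho>)\<^sup>2" using False c by (intro power_mono) auto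
      then show ?thesis using that by (simp add: S_def)
    qed
    then have "(a / c)\<^sup>2 \<le> prohorov P Q"
      unfolding prohorov_def S_def[symmetric] using S by (intro cInf_greatest) auto
    then have "a / c \<le> sqrt (prohorov P Q)" by (rule real_le_rsqrt)
    then show ?thesis using c by (simp add: field_simps)
  qed
qed

theorem proposition6:
  fixes Omega1 :: "'w measure" and Omega2 :: "'v measure"
    and X :: "'w \<Rightarrow> real^'k" and Y :: "'v \<Rightarrow> real^'k" and M :: real
  assumes "good_random_valuation Omega1 X" and "good_random_valuation Omega2 Y"
    and "M \<ge> 1"
    and "AE w in Omega1. norm1 (X w) \<le> M"
    and "AE w in Omega2. norm1 (Y w) \<le> M"
  shows "\<bar>Rev Omega1 X - Rev Omega2 Y\<bar> \<le> (2 * M + 1) * sqrt (Dist Omega1 X Omega2 Y)"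
proof -
  have P: "prob_space (distr Omega1 borel X)" "prob_space (distr Omega2 borel Y)"
    using assms(1,2) unfolding good_random_valuation_def by (auto intro: prob_space.prob_space_distr)
  have c: "0 < 2 * M + 1" using assms(3) by simp
  have "Rev Omega1 X - Rev Omega2 Y \<le> (2 * M + 1) * sqrt (Dist Omega1 X Omega2 Y)"
    unfolding Dist_def using P c Rev_le_Rev_add_sqrt[OF assms(2,1,3,5,4)]
    by (intro le_sqrt_prohorovI) (auto simp: algebra_simps)
  moreover have "Rev Omega2 Y - Rev Omega1 X \<le> (2 * M + 1) * sqrt (Dist Omega1 X Omega2 Y)"
    unfolding Dist_def using P c Rev_le_Rev_add_sqrt[OF assms(1,2,3,4,5)]
    by (intro le_sqrt_prohorovI) (auto simp: algebra_simps)
  ultimately show ?thesis by (simp add: abs_le_iff)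
qed

end
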